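(* Let $\lambda>0$, $\gamma>0$, and let $\beta_1=\beta_1(\gamma)$ be the unique positive solution of $\frac{\sqrt\pi}{2}\gamma x(1+x)^{1/2}(3+x)=1$. Let $h:[0,\lambda]\to\mathbb{R}$ be a bounded analytic function with $0\le h\le 1$, let $\eta\in[0,\lambda]$ and $b_1,b_2\in[0,\beta_1)$. Then $$\int_0^\eta\left|\frac{\exp\left(-2\int_0^x\frac{\xi}{1+b_1h(\xi)}d\xi\right)}{1+b_1h(x)}-\frac{\exp\left(-2\int_0^x\frac{\xi}{1+b_2h(\xi)}d\xi\right)}{1+b_2h(x)}\right|dx\le\frac{1}{2\gamma\beta_1}|b_1-b_2|.$$ *)

theory Defs
  imports "HOL-Analysis.Analysis"
begin

definition real_analytic_on :: "(real \<Rightarrow> real) \<Rightarrow> real set \<Rightarrow> bool" where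
  "real_analytic_on h S \<longleftrightarrow>
     (\<forall>x\<in>S. \<exists>r>0. \<exists>c::nat \<Rightarrow> real.
        \<forall>y\<in>S. \<bar>y - x\<bar> < r \<longrightarrow> (\<lambda>n. c n * (y - x) ^ n) sums h y)"

definition beta1 :: "real \<Rightarrow> real" where
  "beta1 \<gamma> = (THE x. x > 0 \<and> sqrt pi / 2 * \<gamma> * x * sqrt (1 + x) * (3 + x) = 1)"

end

theory Submission
  imports Defs "HOL-Probability.Distributions"
begin

text \<open>Write \<open>\<phi>\<^sub>b(x) = \<integral>\<^sub>0\<^sup>x \<xi> / (1 + b h(\<xi>)) d\<xi>\<close>. Since \<open>1 \<le> 1 + b h \<le> 1 + \<beta>\<^sub>1\<close>, we have
  \<open>\<phi>\<^sub>b(x) \<ge> x\<^sup>2 / (2(1 + \<beta>\<^sub>1))\<close>, and both \<open>\<phi>\<^sub>b(x)\<close> and \<open>1 / (1 + b h(x))\<close> are Lipschitz in \<open>b\<close>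
  with constants \<open>x\<^sup>2/2\<close> and \<open>1\<close>. Hence the integrand is bounded by
  \<open>\<bar>b\<^sub>1 - b\<^sub>2\<bar> (1 + x\<^sup>2) exp (-x\<^sup>2 / (1 + \<beta>\<^sub>1))\<close>, whose integral over the half line is
  \<open>\<bar>b\<^sub>1 - b\<^sub>2\<bar> \<surd>\<pi> \<surd>(1 + \<beta>\<^sub>1) (3 + \<beta>\<^sub>1) / 4\<close>; the equation defining \<open>\<beta>\<^sub>1\<close> says this is
  exactly \<open>\<bar>b\<^sub>1 - b\<^sub>2\<bar> / (2 \<gamma> \<beta>\<^sub>1)\<close>.\<close>

definition phase :: "real \<Rightarrow> (real \<Rightarrow> real) \<Rightarrow> real \<Rightarrow> real" where
  "phase b h x = integral {0..x} (\<lambda>\<xi>. \<xi> / (1 + b * h \<xi>))"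

definition profile :: "real \<Rightarrow> (real \<Rightarrow> real) \<Rightarrow> real \<Rightarrow> real" where
  "profile b h x = exp (-2 * phase b h x) / (1 + b * h x)"

lemma real_analytic_on_imp_continuous_on:
  assumes "real_analytic_on h S"
  shows "continuous_on S h"
proof (rule continuous_on_eq_continuous_within[THEN iffD2], rule ballI)
  fix x assume "x \<in> S"
  then obtain r c where "r > 0"
    and c: "\<And>y. y \<in> S \<Longrightarrow> \<bar>y - x\<bar> < r \<Longrightarrow> (\<lambda>n. c n * (y - x) ^ n) sums h y"
    using assms unfolding real_analytic_on_def by blast
  show "continuous (at x within S) h"
  proof (cases "x islimpt S")
    case False
    then show ?thesis by (simp add: continuous_trivial_limit trivial_limit_within)
  next
    case True
    then obtain y where y: "y \<in> S" "y \<noteq> x" "\<bar>y - x\<bar> < r"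
      using \<open>r > 0\<close> by (auto simp: islimpt_approachable dist_real_def)
    define g where "g = (\<lambda>t. \<Sum>n. c n * t ^ n)"
    \<comment> \<open>convergence at the point \<open>y \<noteq> x\<close> makes \<open>g\<close> continuous at \<open>0\<close>\<close>
    have "summable (\<lambda>n. c n * (y - x) ^ n)"
      using c[OF y(1,3)] by (simp add: sums_iff)
    then have "isCont g 0"
      unfolding g_def by (rule isCont_powser) (use y in auto)
    then have "isCont (\<lambda>t. g (t - x)) x"
      using continuous_at_compose[of x "\<lambda>t. t - x" g] by (auto simp: o_def intro!: continuous_intros)
    then have "continuous (at x within S) (\<lambda>t. g (t - x))"
      by (rule continuous_at_imp_continuous_at_within)
    then show ?thesis
    proof (rule continuous_transform_within[OF _ \<open>r > 0\<close> \<open>x \<in> S\<close>])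
      fix t assume "t \<in> S" "dist t x < r"
      then show "g (t - x) = h t"
        using c[of t] unfolding g_def dist_real_def by (simp add: sums_iff)
    qed
  qed
qed

lemma beta1_root:
  assumes "\<gamma> > 0"
  shows beta1_pos: "beta1 \<gamma> > 0"
    and beta1_eq: "sqrt pi / 2 * \<gamma> * beta1 \<gamma> * sqrt (1 + beta1 \<gamma>) * (3 + beta1 \<gamma>) = 1"
proof -
  define f where "f = (\<lambda>x. sqrt pi / 2 * \<gamma> * x * sqrt (1 + x) * (3 + x))"
  have f_less: "f x < f y" if "0 < x" "x < y" for x y
  proof -
    have "sqrt pi / 2 * \<gamma> * x < sqrt pi / 2 * \<gamma> * y"
      using that assms by simp
    then have "sqrt pi / 2 * \<gamma> * x * sqrt (1 + x) < sqrt pi / 2 * \<gamma> * y * sqrt (1 + y)"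
      by (rule mult_less_le_imp_less) (use that assms in simp_all)
    then show ?thesis
      unfolding f_def by (rule mult_strict_mono) (use that assms in simp_all)
  qed
  have "f 0 \<le> 1" by (simp add: f_def)
  moreover have "1 \<le> f (1 / \<gamma>)"
  proof -
    have "1 * (1 * 3) \<le> sqrt pi * (sqrt (1 + 1 / \<gamma>) * (3 + 1 / \<gamma>))"
      using pi_gt3 assms by (intro mult_mono) auto
    then show ?thesis using assms by (simp add: f_def field_simps)
  qed
  moreover have "continuous_on {0..1 / \<gamma>} f"
    unfolding f_def by (intro continuous_intros)
  ultimately obtain x where "0 \<le> x" "f x = 1"
    using IVT'[of f 0 1 "1 / \<gamma>"] assms by auto
  then have "x > 0" by (cases "x = 0") (auto simp: f_def)
  have "(THE x. x > 0 \<and> f x = 1) = x"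
  proof (rule the_equality)
    show "x > 0 \<and> f x = 1" using \<open>x > 0\<close> \<open>f x = 1\<close> by simp
  next
    fix y assume "y > 0 \<and> f y = 1"
    then show "y = x"
      using f_less[of y x] f_less[of x y] \<open>x > 0\<close> \<open>f x = 1\<close> by (cases y x rule: linorder_cases) auto
  qed
  then have "beta1 \<gamma> = x" by (simp add: beta1_def f_def)
  with \<open>x > 0\<close> \<open>f x = 1\<close> show "beta1 \<gamma> > 0"
    and "sqrt pi / 2 * \<gamma> * beta1 \<gamma> * sqrt (1 + beta1 \<gamma>) * (3 + beta1 \<gamma>) = 1"
    by (simp_all add: f_def)
qed

lemma has_integral_gaussian_weight:
  fixes a :: real
  assumes "a > 0"
  shows "((\<lambda>x. (1 + x\<^sup>2) * exp (- x\<^sup>2 / a)) has_integral sqrt pi / 4 * sqrt a * (2 + a)) {0..}"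
proof -
  have m2: "has_bochner_integral lborel (\<lambda>t. indicator {0..} t *\<^sub>R (exp (- t\<^sup>2) * t ^ (2 * 1)))
      (sqrt pi / 2 * (fact (2 * 1) / (2 ^ (2 * 1) * fact 1)))"
    by (rule gaussian_moment_even_pos)
  have "has_bochner_integral lborel
      (\<lambda>t. indicator {0..} t *\<^sub>R exp (- t\<^sup>2) + a * (indicator {0..} t *\<^sub>R (exp (- t\<^sup>2) * t\<^sup>2)))
      (sqrt pi / 2 + a * (sqrt pi / 4))"
    using has_bochner_integral_add[OF gaussian_moment_0 has_bochner_integral_mult_right[OF m2, of a]]
    by (simp add: fact_numeral)
  then have "has_bochner_integral lborel (\<lambda>t. indicator {0..} t * ((1 + a * t\<^sup>2) * exp (- t\<^sup>2)))
      (sqrt pi / 4 * (2 + a))"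
    by (simp add: field_simps)
  \<comment> \<open>substitute \<open>t = x / \<surd>a\<close>\<close>
  then have "has_bochner_integral lborel
      (\<lambda>x. indicator {0..} (x / sqrt a) * ((1 + a * (x / sqrt a)\<^sup>2) * exp (- (x / sqrt a)\<^sup>2)))
      (sqrt pi / 4 * sqrt a * (2 + a))"
    by (subst (asm) lborel_has_bochner_integral_real_affine_iff[where c = "1 / sqrt a" and t = 0])
       (use assms in \<open>simp_all add: field_simps\<close>)
  also have "(\<lambda>x. indicator {0..} (x / sqrt a) * ((1 + a * (x / sqrt a)\<^sup>2) * exp (- (x / sqrt a)\<^sup>2)))
      = (\<lambda>x. if x \<in> {0..} then (1 + x\<^sup>2) * exp (- x\<^sup>2 / a) else 0)"
    using assms by (auto simp: fun_eq_iff indicator_def power_divide zero_le_divide_iff)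
  finally have I: "has_bochner_integral lborel
      (\<lambda>x. if x \<in> {0..} then (1 + x\<^sup>2) * exp (- x\<^sup>2 / a) else 0) (sqrt pi / 4 * sqrt a * (2 + a))" .
  have "((\<lambda>x. if x \<in> {0..} then (1 + x\<^sup>2) * exp (- x\<^sup>2 / a) else 0) has_integral
      sqrt pi / 4 * sqrt a * (2 + a)) UNIV"
    using has_integral_integral_lborel[OF integrable.intros[OF I]]
    by (simp only: has_bochner_integral_integral_eq[OF I])
  then show ?thesis
    by (simp only: has_integral_restrict_UNIV)
qed

lemma has_integral_id:
  fixes a b :: real
  assumes "a \<le> b"
  shows "((\<lambda>\<xi>. \<xi>) has_integral (b\<^sup>2 - a\<^sup>2) / 2) {a..b}"
proof -
  have "((\<lambda>\<xi>. \<xi>) has_integral b\<^sup>2 / 2 - a\<^sup>2 / 2) {a..b}"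
    by (rule fundamental_theorem_of_calculus[OF assms])
       (auto intro!: derivative_eq_intros simp flip: has_real_derivative_iff_has_vector_derivative)
  then show ?thesis by (simp add: diff_divide_distrib)
qed

lemma exp_neg_diff_le:
  fixes u v m :: real
  assumes "m \<le> u" "m \<le> v"
  shows "\<bar>exp (- u) - exp (- v)\<bar> \<le> \<bar>u - v\<bar> * exp (- m)"
proof -
  have ordered: "exp (- p) - exp (- q) \<le> (q - p) * exp (- m)" if "m \<le> p" "p \<le> q" for p q
  proof -
    have "exp (- p) - exp (- q) = exp (- p) * (1 - exp (- (q - p)))"
      by (simp add: algebra_simps flip: exp_add)
    also have "\<dots> \<le> exp (- p) * (q - p)"
    proof (rule mult_left_mono)
      show "1 - exp (- (q - p)) \<le> q - p"
        using exp_ge_add_one_self[of "- (q - p)"] by linarith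
    qed simp
    also have "\<dots> \<le> exp (- m) * (q - p)"
      using that by (intro mult_right_mono) auto
    finally show ?thesis by (simp add: mult.commute)
  qed
  show ?thesis
    using ordered[of u v] ordered[of v u] assms by (cases "u \<le> v") (auto simp: abs_if)
qed

lemma inverse_one_plus_mult_diff_le:
  fixes b1 b2 t :: real
  assumes "0 \<le> b1" "0 \<le> b2" "0 \<le> t"
  shows "\<bar>1 / (1 + b1 * t) - 1 / (1 + b2 * t)\<bar> \<le> \<bar>b1 - b2\<bar> * t"
proof -
  have "1 \<le> 1 + b1 * t" "1 \<le> 1 + b2 * t"
    using assms by simp_all
  then have "1 / (1 + b1 * t) - 1 / (1 + b2 * t) = (b2 - b1) * t / ((1 + b1 * t) * (1 + b2 * t))"
    by (simp add: field_simps)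
  also have "\<bar>\<dots>\<bar> = \<bar>b1 - b2\<bar> * t / ((1 + b1 * t) * (1 + b2 * t))"
    using \<open>1 \<le> 1 + b1 * t\<close> \<open>1 \<le> 1 + b2 * t\<close> assms(3)
    by (simp add: abs_mult abs_minus_commute)
  also have "\<dots> \<le> \<bar>b1 - b2\<bar> * t / 1"
    using \<open>1 \<le> 1 + b1 * t\<close> \<open>1 \<le> 1 + b2 * t\<close> assms(3)
    by (intro divide_left_mono) (auto intro: mult_ge1_I)
  finally show ?thesis by simp
qed

context
  fixes h :: "real \<Rightarrow> real" and L :: real
  assumes cont: "continuous_on {0..L} h"
    and range: "\<And>\<xi>. \<xi> \<in> {0..L} \<Longrightarrow> 0 \<le> h \<xi> \<and> h \<xi> \<le> 1"
begin

lemma one_le_denominator: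
  assumes "0 \<le> b" "\<xi> \<in> {0..L}"
  shows "1 \<le> 1 + b * h \<xi>"
  using range[OF assms(2)] assms(1) by simp

lemma continuous_on_weight:
  assumes "0 \<le> b"
  shows "continuous_on {0..L} (\<lambda>\<xi>. \<xi> / (1 + b * h \<xi>))"
  using one_le_denominator[OF assms] by (intro continuous_intros cont) force

lemma integrable_weight:
  assumes "0 \<le> b" "x \<in> {0..L}"
  shows "(\<lambda>\<xi>. \<xi> / (1 + b * h \<xi>)) integrable_on {0..x}"
  by (rule integrable_on_subinterval[OF integrable_continuous_interval[OF continuous_on_weight[OF assms(1)]]])
     (use assms(2) in auto)

lemma continuous_on_profile:
  assumes "0 \<le> b"
  shows "continuous_on {0..L} (profile b h)"
proof -
  have "continuous_on {0..L} (phase b h)"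
    unfolding phase_def using integrable_weight[OF assms, of L]
    by (cases "0 \<le> L") (auto intro: indefinite_integral_continuous_1)
  then show ?thesis
    unfolding profile_def using one_le_denominator[OF assms]
    by (intro continuous_intros cont ballI) (metis not_one_le_zero)+
qed

lemma phase_ge:
  assumes "0 \<le> b" "b \<le> B" "x \<in> {0..L}"
  shows "x\<^sup>2 / (2 * (1 + B)) \<le> phase b h x"
proof -
  have lower: "((\<lambda>\<xi>. \<xi> / (1 + B)) has_integral x\<^sup>2 / (2 * (1 + B))) {0..x}"
    using has_integral_divide[OF has_integral_id[of 0 x], of "1 + B"] assms by simp
  have pointwise: "\<xi> / (1 + B) \<le> \<xi> / (1 + b * h \<xi>)" if "\<xi> \<in> {0..x}" for \<xi>
  proof -
    have "b * h \<xi> \<le> B"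
      using range[of \<xi>] that assms mult_mono[of b B "h \<xi>" 1] by auto
    then show ?thesis
      using one_le_denominator[OF assms(1), of \<xi>] that assms
      by (intro divide_left_mono) (auto intro: mult_pos_pos)
  qed
  show ?thesis
    unfolding phase_def
    by (rule has_integral_le[OF lower integrable_integral[OF integrable_weight[OF assms(1,3)]] pointwise])
qed

lemma phase_diff_le:
  assumes "0 \<le> b1" "0 \<le> b2" "x \<in> {0..L}"
  shows "\<bar>phase b1 h x - phase b2 h x\<bar> \<le> \<bar>b1 - b2\<bar> * (x\<^sup>2 / 2)"
proof -
  have "phase b1 h x - phase b2 h x = integral {0..x} (\<lambda>\<xi>. \<xi> / (1 + b1 * h \<xi>) - \<xi> / (1 + b2 * h \<xi>))"
    unfolding phase_def using integrable_weight assms by (simp add: integral_diff)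
  also have "\<bar>\<dots>\<bar> \<le> integral {0..x} (\<lambda>\<xi>. \<bar>b1 - b2\<bar> * \<xi>)"
  proof (rule integral_norm_bound_integral[where 'a = real, unfolded real_norm_def])
    show "(\<lambda>\<xi>. \<xi> / (1 + b1 * h \<xi>) - \<xi> / (1 + b2 * h \<xi>)) integrable_on {0..x}"
      using integrable_weight assms by (intro integrable_diff) auto
    show "(\<lambda>\<xi>. \<bar>b1 - b2\<bar> * \<xi>) integrable_on {0..x}"
      by (intro integrable_continuous_interval continuous_intros)
  next
    fix \<xi> assume "\<xi> \<in> {0..x}"
    then have "0 \<le> \<xi>" "0 \<le> h \<xi>" "h \<xi> \<le> 1" using range[of \<xi>] assms by auto
    have "\<xi> / (1 + b1 * h \<xi>) - \<xi> / (1 + b2 * h \<xi>) = \<xi> * (1 / (1 + b1 * h \<xi>) - 1 / (1 + b2 * h \<xi>))"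
      by (simp add: right_diff_distrib)
    then have "\<bar>\<xi> / (1 + b1 * h \<xi>) - \<xi> / (1 + b2 * h \<xi>)\<bar>
        = \<xi> * \<bar>1 / (1 + b1 * h \<xi>) - 1 / (1 + b2 * h \<xi>)\<bar>"
      using \<open>0 \<le> \<xi>\<close> by (simp add: abs_mult)
    also have "\<dots> \<le> \<xi> * (\<bar>b1 - b2\<bar> * h \<xi>)"
      using inverse_one_plus_mult_diff_le[OF assms(1,2) \<open>0 \<le> h \<xi>\<close>] \<open>0 \<le> \<xi>\<close> by (rule mult_left_mono)
    also have "\<dots> \<le> \<bar>b1 - b2\<bar> * \<xi>"
      using \<open>0 \<le> \<xi>\<close> \<open>h \<xi> \<le> 1\<close> mult_left_mono[of "h \<xi>" 1 "\<bar>b1 - b2\<bar> * \<xi>"] by (simp add: algebra_simps)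
    finally show "\<bar>\<xi> / (1 + b1 * h \<xi>) - \<xi> / (1 + b2 * h \<xi>)\<bar> \<le> \<bar>b1 - b2\<bar> * \<xi>" .
  qed
  also have "\<dots> = \<bar>b1 - b2\<bar> * (x\<^sup>2 / 2)"
    using has_integral_mult_right[OF has_integral_id[of 0 x], of "\<bar>b1 - b2\<bar>"] assms
    by (simp add: integral_unique)
  finally show ?thesis .
qed

lemma profile_diff_le:
  assumes "0 \<le> b1" "b1 \<le> B" "0 \<le> b2" "b2 \<le> B" "x \<in> {0..L}"
  shows "\<bar>profile b1 h x - profile b2 h x\<bar> \<le> \<bar>b1 - b2\<bar> * ((1 + x\<^sup>2) * exp (- x\<^sup>2 / (1 + B)))"
proof -
  define e1 e2 where "e1 = exp (-2 * phase b1 h x)" and "e2 = exp (-2 * phase b2 h x)"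
  define D1 D2 where "D1 = 1 + b1 * h x" and "D2 = 1 + b2 * h x"
  define E where "E = exp (- x\<^sup>2 / (1 + B))"
  have "0 \<le> h x" "h x \<le> 1" using range assms(5) by auto
  then have "1 \<le> D1" "1 \<le> D2" using assms by (simp_all add: D1_def D2_def)
  have phase_bound: "x\<^sup>2 / (1 + B) \<le> 2 * phase b h x" if "0 \<le> b" "b \<le> B" for b
    using phase_ge[OF that assms(5)] that by (simp add: field_simps)
  have "\<bar>e1 - e2\<bar> \<le> \<bar>2 * phase b1 h x - 2 * phase b2 h x\<bar> * E"
    unfolding e1_def e2_def E_def
    using exp_neg_diff_le[OF phase_bound[OF assms(1,2)] phase_bound[OF assms(3,4)]] by simp
  also have "\<dots> \<le> \<bar>b1 - b2\<bar> * x\<^sup>2 * E"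
  proof (rule mult_right_mono)
    have "\<bar>b1 - b2\<bar> * (x\<^sup>2 / 2) = \<bar>b1 - b2\<bar> * x\<^sup>2 / 2" by simp
    then show "\<bar>2 * phase b1 h x - 2 * phase b2 h x\<bar> \<le> \<bar>b1 - b2\<bar> * x\<^sup>2"
      using phase_diff_le[OF assms(1,3,5)] by linarith
  qed (simp add: E_def)
  finally have e_diff: "\<bar>e1 - e2\<bar> \<le> \<bar>b1 - b2\<bar> * x\<^sup>2 * E" .
  have e2_le: "e2 \<le> E"
    unfolding e2_def E_def using phase_bound[OF assms(3,4)] by simp
  have D_diff: "\<bar>1 / D1 - 1 / D2\<bar> \<le> \<bar>b1 - b2\<bar>"
    using inverse_one_plus_mult_diff_le[OF assms(1,3) \<open>0 \<le> h x\<close>]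
      mult_left_mono[OF \<open>h x \<le> 1\<close> abs_ge_zero, of "b1 - b2", unfolded mult_1_right]
    unfolding D1_def D2_def by linarith
  have "e1 / D1 - e2 / D2 = (e1 - e2) / D1 + e2 * (1 / D1 - 1 / D2)"
    using \<open>1 \<le> D1\<close> \<open>1 \<le> D2\<close> by (simp add: field_simps)
  then have "\<bar>e1 / D1 - e2 / D2\<bar> \<le> \<bar>e1 - e2\<bar> / D1 + e2 * \<bar>1 / D1 - 1 / D2\<bar>"
    using abs_triangle_ineq[of "(e1 - e2) / D1" "e2 * (1 / D1 - 1 / D2)"] \<open>1 \<le> D1\<close>
    by (simp add: abs_mult e2_def)
  also have "\<dots> \<le> \<bar>e1 - e2\<bar> + E * \<bar>b1 - b2\<bar>"
  proof (rule add_mono)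
    show "\<bar>e1 - e2\<bar> / D1 \<le> \<bar>e1 - e2\<bar>"
      using \<open>1 \<le> D1\<close> by (simp add: divide_le_eq mult_le_cancel_left1)
    show "e2 * \<bar>1 / D1 - 1 / D2\<bar> \<le> E * \<bar>b1 - b2\<bar>"
      using e2_le D_diff by (intro mult_mono) (auto simp: e2_def E_def)
  qed
  also have "\<dots> \<le> \<bar>b1 - b2\<bar> * ((1 + x\<^sup>2) * E)"
    using e_diff by (simp add: algebra_simps)
  finally show ?thesis
    unfolding profile_def e1_def e2_def D1_def D2_def E_def .
qed


lemma integral_profile_diff_le:
  assumes "0 \<le> b1" "b1 \<le> B" "0 \<le> b2" "b2 \<le> B" "\<eta> \<in> {0..L}"
  shows "integral {0..\<eta>} (\<lambda>x. \<bar>profile b1 h x - profile b2 h x\<bar>)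
    \<le> \<bar>b1 - b2\<bar> * (sqrt pi / 4 * sqrt (1 + B) * (3 + B))"
proof -
  have "B \<ge> 0" using assms(1,2) by simp
  have sub: "{0..\<eta>} \<subseteq> {0..L}" using assms(5) by auto
  have profile_cont: "continuous_on {0..\<eta>} (profile b h)" if "0 \<le> b" for b
    using continuous_on_subset[OF continuous_on_profile[OF that] sub] .
  define G where "G = (\<lambda>x::real. (1 + x\<^sup>2) * exp (- x\<^sup>2 / (1 + B)))"
  have G_cont: "continuous_on S G" for S
    unfolding G_def using \<open>B \<ge> 0\<close> by (intro continuous_intros) auto
  have G_int: "(G has_integral sqrt pi / 4 * sqrt (1 + B) * (3 + B)) {0..}"
    using has_integral_gaussian_weight[of "1 + B"] \<open>B \<ge> 0\<close> by (simp add: G_def add.assoc)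
  have "integral {0..\<eta>} (\<lambda>x. \<bar>profile b1 h x - profile b2 h x\<bar>) \<le> integral {0..\<eta>} (\<lambda>x. \<bar>b1 - b2\<bar> * G x)"
    using profile_diff_le[OF assms(1-4)] sub
    by (intro integral_le integrable_continuous_interval continuous_intros profile_cont G_cont assms(1,3))
       (auto simp: G_def)
  also have "\<dots> = \<bar>b1 - b2\<bar> * integral {0..\<eta>} G"
    by (rule integral_mult_right)
  also have "\<dots> \<le> \<bar>b1 - b2\<bar> * (sqrt pi / 4 * sqrt (1 + B) * (3 + B))"
  proof (rule mult_left_mono)
    have "integral {0..\<eta>} G \<le> integral {0..} G"
      using G_int by (intro integral_subset_le integrable_continuous_interval G_cont)
        (auto simp: G_def)
    then show "integral {0..\<eta>} G \<le> sqrt pi / 4 * sqrt (1 + B) * (3 + B)"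
      using G_int by (simp add: integral_unique)
  qed simp
  finally show ?thesis .
qed

end

theorem lemma3p8:
  fixes lam \<gamma> \<eta> b1 b2 :: real and h :: "real \<Rightarrow> real"
  assumes "lam > 0" and "\<gamma> > 0"
    and "real_analytic_on h {0..lam}"
    and "bounded (h ` {0..lam})"
    and "\<And>x. x \<in> {0..lam} \<Longrightarrow> 0 \<le> h x \<and> h x \<le> 1"
    and "\<eta> \<in> {0..lam}"
    and "b1 \<in> {0..<beta1 \<gamma>}" and "b2 \<in> {0..<beta1 \<gamma>}"
  shows "integral {0..\<eta>} (\<lambda>x.
           \<bar>exp (-2 * integral {0..x} (\<lambda>\<xi>. \<xi> / (1 + b1 * h \<xi>))) / (1 + b1 * h x)
            - exp (-2 * integral {0..x} (\<lambda>\<xi>. \<xi> / (1 + b2 * h \<xi>))) / (1 + b2 * h x)\<bar>)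
         \<le> 1 / (2 * \<gamma> * beta1 \<gamma>) * \<bar>b1 - b2\<bar>"
proof -
  define \<beta> where "\<beta> = beta1 \<gamma>"
  have "\<beta> > 0" using beta1_pos[OF assms(2)] by (simp add: \<beta>_def)
  have b: "0 \<le> b1" "b1 \<le> \<beta>" "0 \<le> b2" "b2 \<le> \<beta>" using assms(7,8) by (auto simp: \<beta>_def)
  have "integral {0..\<eta>} (\<lambda>x. \<bar>profile b1 h x - profile b2 h x\<bar>)
    \<le> \<bar>b1 - b2\<bar> * (sqrt pi / 4 * sqrt (1 + \<beta>) * (3 + \<beta>))"
    using real_analytic_on_imp_continuous_on[OF assms(3)] assms(5) b assms(6)
    by (rule integral_profile_diff_le)
  also have "sqrt pi / 4 * sqrt (1 + \<beta>) * (3 + \<beta>) = 1 / (2 * \<gamma> * \<beta>)"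
    using beta1_eq[OF assms(2)] \<open>\<beta> > 0\<close> assms(2) by (simp add: \<beta>_def field_simps)
  finally show ?thesis
    unfolding profile_def phase_def \<beta>_def by (simp add: mult.commute)
qed

end
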